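(* There exists $\varepsilon_0>0$ such that for all $\varepsilon\in(0,\varepsilon_0)$ the following holds. Let $R^*\in\{R^{(1)},R^{(2)}\}$, let $\widehat T$ be a directed tree on $\{X,Y,Z\}$ satisfying $D_{\mathrm{KL}}(R^*\,\|\,R^*_{\widehat T})\le\min_TD_{\mathrm{KL}}(R^*\,\|\,R^*_T)+\frac{\varepsilon}{100}$ (minimum over directed trees $T$ on $\{X,Y,Z\}$), and let $\widehat R=\arg\min_{R\in\{R^{(1)},R^{(2)}\}}D_{\mathrm{KL}}(R\,\|\,R_{\widehat T})$. Then $\widehat R=R^*$.
   Context: Let $H,N_1,N_2,N_3$ be independent $\mathcal{N}(0,1)$ variables. $Q^{(1)}$: $X=(1+\varepsilon)H+N_1$, $Y=H+N_2$, $Z=H+N_3$. $Q^{(2)}$: $X=H+N_1$, $Y=(1+\varepsilon)H+N_2$, $Z=H+N_3$. $R^{(1)},R^{(2)}$ are the marginal distributions of $(X,Y,Z)$ under $Q^{(1)},Q^{(2)}$ respectively. A directed tree on $\{X,Y,Z\}$ is a directed graph with a root from which every other vertex is reached by exactly one directed path. For a distribution $R$ and a directed tree $T$, $R_T=\arg\min_QD_{\mathrm{KL}}(R\,\|\,Q)$ over Gaussian $Q$ whose density factorizes as $\prod_vQ(v\mid\mathrm{pa}_T(v))$. *)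

theory Defs
  imports "HOL-Analysis.Analysis"
begin

text \<open>Variables X, Y, Z are the coordinates 1, 2, 3 of the index type 3
 (vertices of the graph are elements of type 3).
 A (nondegenerate) Gaussian distribution on R^3 is given by a mean vector and a
 symmetric positive definite covariance matrix.\<close>

type_synonym gauss3 = "(real^3) \<times> (real^3^3)"

definition pos_def3 :: "real^3^3 \<Rightarrow> bool" where
  "pos_def3 S \<longleftrightarrow> transpose S = S \<and> (\<forall>x. x \<noteq> 0 \<longrightarrow> x \<bullet> (S *v x) > 0)"

definition is_gauss3 :: "gauss3 \<Rightarrow> bool" where
  "is_gauss3 Q \<longleftrightarrow> pos_def3 (snd Q)"

definition gdens3 :: "gauss3 \<Rightarrow> real^3 \<Rightarrow> real" where
  "gdens3 Q x = (let mu = fst Q; S = snd Q in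
     exp (- (1/2) * ((x - mu) \<bullet> (matrix_inv S *v (x - mu)))) / sqrt ((2*pi)^3 * det S))"

definition gdens1 :: "real \<Rightarrow> real \<Rightarrow> real \<Rightarrow> real" where
  "gdens1 m s t = exp (- (t - m)\<^sup>2 / (2 * s)) / sqrt (2 * pi * s)"

definition gdens2 :: "real \<Rightarrow> real \<Rightarrow> real \<Rightarrow> real \<Rightarrow> real \<Rightarrow> real \<Rightarrow> real \<Rightarrow> real" where
  "gdens2 mu mv suu suv svv tu tv =
     (let d = suu * svv - suv\<^sup>2;
          q = (svv * (tu - mu)\<^sup>2 - 2 * suv * (tu - mu) * (tv - mv) + suu * (tv - mv)\<^sup>2) / d
      in exp (- q / 2) / (2 * pi * sqrt d))"

definition marg1 :: "gauss3 \<Rightarrow> 3 \<Rightarrow> real^3 \<Rightarrow> real" where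
  "marg1 Q v x = gdens1 (fst Q $ v) (snd Q $ v $ v) (x $ v)"

definition cond1 :: "gauss3 \<Rightarrow> 3 \<Rightarrow> 3 \<Rightarrow> real^3 \<Rightarrow> real" where
  "cond1 Q v u x =
     gdens2 (fst Q $ u) (fst Q $ v) (snd Q $ u $ u) (snd Q $ u $ v) (snd Q $ v $ v) (x $ u) (x $ v)
     / marg1 Q u x"

definition is_walk :: "(3 \<times> 3) set \<Rightarrow> 3 list \<Rightarrow> bool" where
  "is_walk E p \<longleftrightarrow> p \<noteq> [] \<and> (\<forall>i. Suc i < length p \<longrightarrow> (p ! i, p ! Suc i) \<in> E)"

definition dtree :: "(3 \<times> 3) set \<Rightarrow> bool" where
  "dtree E \<longleftrightarrow> (\<exists>r. \<forall>v. v \<noteq> r \<longrightarrow> (\<exists>!p. is_walk E p \<and> hd p = r \<and> last p = v))"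

text \<open>Factor Q(v | pa_T(v)); in a directed tree each vertex has at most one parent.\<close>
definition factor :: "(3 \<times> 3) set \<Rightarrow> gauss3 \<Rightarrow> 3 \<Rightarrow> real^3 \<Rightarrow> real" where
  "factor E Q v x = (if \<exists>u. (u, v) \<in> E then cond1 Q v (THE u. (u, v) \<in> E) x else marg1 Q v x)"

definition factorizes :: "(3 \<times> 3) set \<Rightarrow> gauss3 \<Rightarrow> bool" where
  "factorizes E Q \<longleftrightarrow> (\<forall>x. gdens3 Q x = (\<Prod>v\<in>UNIV. factor E Q v x))"

definition KL3 :: "gauss3 \<Rightarrow> gauss3 \<Rightarrow> real" where
  "KL3 P Q = (1/2) * (trace (matrix_inv (snd Q) ** snd P)
      + (fst Q - fst P) \<bullet> (matrix_inv (snd Q) *v (fst Q - fst P)) - 3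
      + ln (det (snd Q) / det (snd P)))"

text \<open>D(R || R_T) = min over Gaussians Q factorizing along T of D(R || Q).\<close>
definition KL_tree :: "gauss3 \<Rightarrow> (3 \<times> 3) set \<Rightarrow> real" where
  "KL_tree R T = (INF Q \<in> {Q. is_gauss3 Q \<and> factorizes T Q}. KL3 R Q)"

text \<open>The distributions R^(1), R^(2): X = a1 H + N1, Y = a2 H + N2, Z = a3 H + N3,
 so the mean is 0 and the covariance is a a^T + I.\<close>
definition latent_model :: "real^3 \<Rightarrow> gauss3" where
  "latent_model a = (0, (\<chi> i j. a $ i * a $ j + (if i = j then 1 else 0)))"

definition R1 :: "real \<Rightarrow> gauss3" where
  "R1 \<epsilon> = latent_model (vector [1 + \<epsilon>, 1, 1])"

definition R2 :: "real \<Rightarrow> gauss3" where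
  "R2 \<epsilon> = latent_model (vector [1, 1 + \<epsilon>, 1])"

end

theory Submission
  imports Defs
begin

text \<open>A directed tree on three vertices is a star or a path; either way some vertex b separates
the other two, a and c. A Gaussian factorizing along such a tree has no interaction between the
coordinates a and c, so the a-c entry of its precision matrix vanishes. Minimising D(R || Q) over
such Q then yields the conditional mutual information I(X_a; X_c | X_b) of R, attained by the
Gaussian that keeps the (a,b)- and (c,b)-marginals of R. For the latent model with loadings v this
value depends only on the centre b. With loadings (t,1,1), t = 1 + \<epsilon>, it is smaller by
ln (3 (t^2 + 1) / (2 (t^2 + 2))) / 2 \<ge> \<epsilon>/24 > \<epsilon>/100 when the centre is the vertex with loading t.
So an \<epsilon>/100-optimal tree for R* is centred at the heavy vertex of R*, and on that tree the other
model pays the larger value.\<close>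

lemma one_plus_ln_le_mult_minus_ln:
  fixes k x :: real
  assumes "k > 0" "x > 0"
  shows "1 + ln x \<le> k * x - ln k"
proof -
  have "ln (k * x) \<le> k * x - 1" using ln_le_minus_one assms by simp
  then show ?thesis using assms by (simp add: ln_mult)
qed

text \<open>The left-hand side is tr (K S) - ln det K for a precision matrix K with k_ac = 0. In terms of
the Schur complement w = k_bb - k_ab^2/k_aa - k_cb^2/k_cc it splits into three terms k x - ln k,
each of which is at least 1 + ln x.\<close>
lemma trace_logdet_lower_bound:
  fixes kaa kbb kcc kab kcb saa sbb scc sab scb :: real
  assumes kaa: "kaa > 0" and kcc: "kcc > 0"
    and D: "kaa * kbb * kcc - kab^2 * kcc - kcb^2 * kaa > 0"
    and sbb: "sbb > 0" and sa: "saa * sbb - sab^2 > 0" and sc: "scc * sbb - scb^2 > 0"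
  shows "3 + ln (saa * sbb - sab^2) + ln (scc * sbb - scb^2) - ln sbb
    \<le> kaa * saa + kbb * sbb + kcc * scc + 2 * kab * sab + 2 * kcb * scb
      - ln (kaa * kbb * kcc - kab^2 * kcc - kcb^2 * kaa)"
proof -
  define w where "w = kbb - kab^2/kaa - kcb^2/kcc"
  define xa where "xa = saa + 2 * (kab/kaa) * sab + (kab/kaa)^2 * sbb"
  define xc where "xc = scc + 2 * (kcb/kcc) * scb + (kcb/kcc)^2 * sbb"
  have Dw: "kaa * kbb * kcc - kab^2 * kcc - kcb^2 * kaa = kaa * kcc * w"
    using kaa kcc by (simp add: w_def field_simps power2_eq_square)
  have w: "w > 0" using D Dw kaa kcc by (metis mult_pos_pos zero_less_mult_pos)
  have xa: "xa = (saa * sbb - sab^2)/sbb + (kab/kaa * sbb + sab)^2/sbb"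
    using sbb kaa by (simp add: xa_def field_simps power2_eq_square)
  have xc: "xc = (scc * sbb - scb^2)/sbb + (kcb/kcc * sbb + scb)^2/sbb"
    using sbb kcc by (simp add: xc_def field_simps power2_eq_square)
  have ln_le: "ln u - ln sbb \<le> ln x" if "u / sbb \<le> x" "u > 0" for u x
  proof -
    have "ln u - ln sbb = ln (u / sbb)" using that sbb by (simp add: ln_div)
    also have "\<dots> \<le> ln x" using that sbb by (intro ln_mono) auto
    finally show ?thesis .
  qed
  have "(saa * sbb - sab^2)/sbb \<le> xa" "(scc * sbb - scb^2)/sbb \<le> xc"
    unfolding xa xc using sbb by simp_all
  moreover have "(saa * sbb - sab^2)/sbb > 0" "(scc * sbb - scb^2)/sbb > 0"
    using sa sc sbb by simp_all
  ultimately have "xa > 0" "xc > 0"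
    and la: "ln (saa * sbb - sab^2) - ln sbb \<le> ln xa"
    and lc: "ln (scc * sbb - scb^2) - ln sbb \<le> ln xc"
    using ln_le sa sc by fastforce+
  have "kaa * saa + kbb * sbb + kcc * scc + 2 * kab * sab + 2 * kcb * scb = kaa * xa + kcc * xc + w * sbb"
    using kaa kcc by (simp add: xa_def xc_def w_def field_simps power2_eq_square)
  moreover have "ln (kaa * kbb * kcc - kab^2 * kcc - kcb^2 * kaa) = ln kaa + ln kcc + ln w"
    using Dw kaa kcc w by (simp add: ln_mult)
  moreover have "1 + ln xa \<le> kaa * xa - ln kaa" "1 + ln xc \<le> kcc * xc - ln kcc" "1 + ln sbb \<le> w * sbb - ln w"
    using one_plus_ln_le_mult_minus_ln kaa kcc w sbb \<open>xa > 0\<close> \<open>xc > 0\<close> by blast+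
  ultimately show ?thesis using la lc by linarith
qed

section \<open>Matrices\<close>

lemma matrix_inv_eqI:
  fixes S K :: "'a::field^'n^'n"
  assumes "S ** K = mat 1"
  shows "matrix_inv S = K"
proof -
  have "K ** S = mat 1" using assms matrix_left_right_inverse by blast
  then have "\<exists>K'. S ** K' = mat 1 \<and> K' ** S = mat 1" using assms by blast
  then have inv: "S ** matrix_inv S = mat 1 \<and> matrix_inv S ** S = mat 1"
    unfolding matrix_inv_def by (rule someI_ex)
  have "matrix_inv S = matrix_inv S ** (S ** K)" using assms by simp
  also have "\<dots> = K" using inv by (simp add: matrix_mul_assoc)
  finally show ?thesis .
qed

lemma transpose_sym_nth: "transpose A = A \<Longrightarrow> A $ j $ i = A $ i $ j"
  by (metis transpose_def vec_lambda_beta)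

lemma inner_axis_matrix_vector_axis:
  fixes K :: "real^'n^'n"
  shows "axis a 1 \<bullet> (K *v axis c 1) = K $ a $ c"
  by (simp add: inner_axis' matrix_vector_mult_basis column_def)

lemma quadratic_form_sum:
  fixes K :: "real^'n^'n"
  shows "y \<bullet> (K *v y) = (\<Sum>i\<in>UNIV. \<Sum>j\<in>UNIV. y$i * K$i$j * y$j)"
  by (simp add: inner_vec_def matrix_vector_mult_def sum_distrib_left ac_simps)

lemma trace_matrix_mult_sum:
  fixes K S :: "real^'n^'n"
  shows "trace (K ** S) = (\<Sum>i\<in>UNIV. \<Sum>j\<in>UNIV. K$i$j * S$j$i)"
  by (simp add: trace_def matrix_matrix_mult_def)

lemma quadratic_form_mixed_difference:
  fixes K :: "real^'n^'n" and m u w :: "real^'n"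
  shows "(u + w - m) \<bullet> (K *v (u + w - m)) + (0 - m) \<bullet> (K *v (0 - m))
       - (u - m) \<bullet> (K *v (u - m)) - (w - m) \<bullet> (K *v (w - m)) = u \<bullet> (K *v w) + w \<bullet> (K *v u)"
proof -
  have neg: "K *v (- m) = - (K *v m)" for m :: "real^'n"
    by (metis diff_0 matrix_vector_mult_0_right matrix_vector_mult_diff_distrib)
  show ?thesis
    by (simp add: inner_add_left inner_add_right inner_diff_left inner_diff_right
        matrix_vector_right_distrib matrix_vector_mult_diff_distrib neg algebra_simps)
qed

lemma pos_def3_matrix_inv_mult:
  assumes "pos_def3 S"
  shows "S ** matrix_inv S = mat 1" "matrix_inv S ** S = mat 1"
proof -
  have "x = 0" if "S *v x = 0" for x
    using assms that unfolding pos_def3_def by force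
  then obtain B where B: "B ** S = mat 1" using matrix_left_invertible_ker by blast
  then have "S ** B = mat 1" using matrix_left_right_inverse by blast
  then show "S ** matrix_inv S = mat 1" "matrix_inv S ** S = mat 1"
    using B matrix_inv_eqI by auto
qed

lemma pos_def3_matrix_inv:
  assumes "pos_def3 S"
  shows "pos_def3 (matrix_inv S)"
  unfolding pos_def3_def
proof (intro conjI allI impI)
  have St: "transpose S = S" using assms unfolding pos_def3_def by simp
  have "transpose (matrix_inv S) ** S = mat 1"
    using arg_cong[OF pos_def3_matrix_inv_mult(1)[OF assms], of transpose]
    by (simp add: matrix_transpose_mul St transpose_mat)
  then have "S ** transpose (matrix_inv S) = mat 1" using matrix_left_right_inverse by blast
  then show "transpose (matrix_inv S) = matrix_inv S" using matrix_inv_eqI by metis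
next
  fix y :: "real^3" assume "y \<noteq> 0"
  define z where "z = matrix_inv S *v y"
  have Sz: "S *v z = y"
    by (simp add: z_def matrix_vector_mul_assoc pos_def3_matrix_inv_mult[OF assms])
  then have "z \<noteq> 0" using \<open>y \<noteq> 0\<close> by auto
  then have "z \<bullet> (S *v z) > 0" using assms unfolding pos_def3_def by blast
  then show "y \<bullet> (matrix_inv S *v y) > 0" using Sz by (simp add: z_def inner_commute)
qed

lemma pos_def3_nonneg: "pos_def3 S \<Longrightarrow> y \<bullet> (S *v y) \<ge> 0"
  unfolding pos_def3_def by (cases "y = 0") (auto intro: less_imp_le)

lemma pos_def3_diag_pos: "pos_def3 S \<Longrightarrow> S $ a $ a > 0"
  unfolding pos_def3_def
  by (metis inner_axis_matrix_vector_axis axis_eq_0_iff zero_neq_one)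

lemma pos_def3_det_matrix_inv: "pos_def3 S \<Longrightarrow> det S * det (matrix_inv S) = 1"
  using pos_def3_matrix_inv_mult by (metis det_I det_mul)

lemma UNIV_3_distinct:
  fixes a b c :: 3
  assumes "distinct [a, b, c]"
  shows "UNIV = {a, b, c}"
  using assms card_subset_eq[of "UNIV::3 set" "{a, b, c}"] by simp

lemma sum_UNIV_3_distinct:
  "distinct [a, b, c] \<Longrightarrow> (\<Sum>v\<in>UNIV. f v) = f a + f b + f (c::3)"
  by (simp add: UNIV_3_distinct add.assoc)

lemma prod_UNIV_3_distinct:
  "distinct [a, b, c] \<Longrightarrow> (\<Prod>v\<in>UNIV. f v) = f a * f b * f (c::3)"
  by (simp add: UNIV_3_distinct mult.assoc)

lemma all_3_distinct:
  "distinct [a, b, c] \<Longrightarrow> (\<forall>v. P v) \<longleftrightarrow> P a \<and> P b \<and> P (c::3)"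
  by (metis UNIV_3_distinct UNIV_I insertE empty_iff)

lemma ex_distinct_3: "\<exists>a c. distinct [r, a, c::3]"
  using exhaust_3[of r]
  by (intro exI[of _ "if r = 1 then 2 else 1"] exI[of _ "if r = 3 then 2 else 3"]) auto

lemma det_3_zero_corner:
  fixes K :: "real^3^3"
  assumes "distinct [a, b, c]" "K$a$c = 0" "K$c$a = 0" "K$b$a = K$a$b" "K$b$c = K$c$b"
  shows "det K = K$a$a * K$b$b * K$c$c - (K$a$b)^2 * K$c$c - (K$c$b)^2 * K$a$a"
  using exhaust_3[of a] exhaust_3[of b] exhaust_3[of c] assms
  by (elim disjE) (simp_all add: det_3 power2_eq_square)

lemma pos_def3_det_pos_zero_corner:
  fixes K :: "real^3^3"
  assumes K: "pos_def3 K" and d: "distinct [a, b, c]" and z: "K$a$c = 0"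
  shows "det K > 0"
proof -
  have Kt: "transpose K = K" using K by (simp add: pos_def3_def)
  have ks: "K$c$a = 0" "K$b$a = K$a$b" "K$b$c = K$c$b"
    using z transpose_sym_nth[OF Kt] by metis+
  have kaa: "K$a$a > 0" and kcc: "K$c$c > 0" using pos_def3_diag_pos[OF K] by blast+
  define y :: "real^3" where "y = (\<chi> i. if i = b then 1 else if i = a then - (K$a$b/K$a$a) else - (K$c$b/K$c$c))"
  have y: "y $ b = 1" "y $ a = - (K$a$b/K$a$a)" "y $ c = - (K$c$b/K$c$c)"
    using d by (auto simp: y_def)
  have "y \<noteq> 0" using y by (metis zero_index zero_neq_one)
  then have "y \<bullet> (K *v y) > 0" using K by (simp add: pos_def3_def)
  moreover have "det K = (K$a$a * K$c$c) * (y \<bullet> (K *v y))"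
    unfolding det_3_zero_corner[OF d z ks] quadratic_form_sum sum_UNIV_3_distinct[OF d] y
    using z ks kaa kcc by (simp add: field_simps power2_eq_square)
  ultimately show ?thesis using kaa kcc by simp
qed

section \<open>Directed trees on three vertices\<close>

definition centred_tree :: "3 \<Rightarrow> 3 \<Rightarrow> 3 \<Rightarrow> (3 \<times> 3) set \<Rightarrow> bool" where
  "centred_tree a b c T \<longleftrightarrow> distinct [a, b, c] \<and> (T = {(b, a), (b, c)} \<or> T = {(a, b), (b, c)})"

definition rooted_at :: "(3 \<times> 3) set \<Rightarrow> 3 \<Rightarrow> bool" where
  "rooted_at E r \<longleftrightarrow> (\<forall>v. v \<noteq> r \<longrightarrow> (\<exists>!p. is_walk E p \<and> hd p = r \<and> last p = v))"

lemma dtree_iff_rooted_at: "dtree E \<longleftrightarrow> (\<exists>r. rooted_at E r)"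
  unfolding dtree_def rooted_at_def ..

lemma is_walk_singleton: "is_walk E [v]"
  by (simp add: is_walk_def)

lemma is_walk_append:
  assumes "is_walk E p" "is_walk E q" "(last p, hd q) \<in> E"
  shows "is_walk E (p @ q)"
  unfolding is_walk_def
proof (intro conjI allI impI)
  show "p @ q \<noteq> []" using assms(1) by (simp add: is_walk_def)
next
  fix i assume i: "Suc i < length (p @ q)"
  have "p \<noteq> []" "q \<noteq> []" using assms(1,2) by (auto simp: is_walk_def)
  consider "Suc i < length p" | "Suc i = length p" | "Suc i > length p" by linarith
  then show "((p @ q) ! i, (p @ q) ! Suc i) \<in> E"
  proof cases
    case 1
    then show ?thesis using assms(1) by (simp add: nth_append is_walk_def)
  next
    case 2
    then have "i = length p - 1" by simp
    with 2 have "(p @ q) ! i = last p" "(p @ q) ! Suc i = hd q"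
      using \<open>p \<noteq> []\<close> \<open>q \<noteq> []\<close> by (auto simp: nth_append last_conv_nth hd_conv_nth)
    then show ?thesis using assms(3) by simp
  next
    case 3
    then have "Suc (i - length p) < length q" using i by auto
    then show ?thesis using assms(2) 3 by (simp add: is_walk_def nth_append Suc_diff_le)
  qed
qed

lemma is_walk_append_left:
  assumes "is_walk E (p @ q)" "p \<noteq> []"
  shows "is_walk E p"
  unfolding is_walk_def
proof (intro conjI allI impI)
  fix i assume i: "Suc i < length p"
  then have "((p @ q) ! i, (p @ q) ! Suc i) \<in> E" using assms(1) unfolding is_walk_def by simp
  then show "(p ! i, p ! Suc i) \<in> E" using i by (simp add: nth_append)
qed (fact assms(2))

lemma is_walk_length_ge_2:
  assumes "is_walk E p" "hd p \<noteq> last p"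
  shows "length p \<ge> 2"
proof (cases p)
  case Nil
  then show ?thesis using assms(1) by (simp add: is_walk_def)
next
  case (Cons x ys)
  then show ?thesis using assms(2) by (cases ys) auto
qed

lemma is_walk_first_edge:
  assumes "is_walk E p" "hd p \<noteq> last p"
  shows "(hd p, p ! 1) \<in> E"
proof -
  have "Suc 0 < length p" using is_walk_length_ge_2[OF assms] by simp
  then have "(p ! 0, p ! Suc 0) \<in> E" using assms(1) unfolding is_walk_def by blast
  moreover have "p \<noteq> []" using \<open>Suc 0 < length p\<close> by auto
  ultimately show ?thesis by (simp add: hd_conv_nth)
qed

lemma is_walk_last_edge:
  assumes "is_walk E p" "hd p \<noteq> last p"
  shows "(p ! (length p - 2), last p) \<in> E"
proof -
  have "length p \<ge> 2" using is_walk_length_ge_2[OF assms] .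
  then have i: "Suc (length p - 2) = length p - 1" "Suc (length p - 2) < length p" by auto
  then have "(p ! (length p - 2), p ! (length p - 1)) \<in> E" using assms(1) unfolding is_walk_def by metis
  moreover have "p \<noteq> []" using i by auto
  ultimately show ?thesis by (simp add: last_conv_nth)
qed

context
  fixes E :: "(3 \<times> 3) set" and r :: 3
  assumes rooted: "rooted_at E r"
begin

lemma rooted_at_walk: "\<exists>p. is_walk E p \<and> hd p = r \<and> last p = v"
proof (cases "v = r")
  case True
  then show ?thesis using is_walk_singleton by fastforce
next
  case False
  then show ?thesis using rooted unfolding rooted_at_def by blast
qed

lemma rooted_at_walk_unique:
  "v \<noteq> r \<Longrightarrow> is_walk E p \<Longrightarrow> hd p = r \<Longrightarrow> last p = v \<Longrightarrow>
    is_walk E q \<Longrightarrow> hd q = r \<Longrightarrow> last q = v \<Longrightarrow> p = q"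
  using rooted unfolding rooted_at_def by blast

lemma rooted_at_no_edge_to_root: "(u, r) \<notin> E"
proof
  assume ur: "(u, r) \<in> E"
  obtain a c where "distinct [r, a, c]" using ex_distinct_3 by blast
  obtain p where p: "is_walk E p" "hd p = r" "last p = u" using rooted_at_walk by blast
  obtain q where q: "is_walk E q" "hd q = r" "last q = a" using rooted_at_walk by blast
  have "p \<noteq> []" "q \<noteq> []" using p q by (auto simp: is_walk_def)
  have "a \<noteq> r" using \<open>distinct [r, a, c]\<close> by auto
  have "is_walk E (p @ q)" using is_walk_append[OF p(1) q(1)] ur p(3) q(2) by simp
  moreover have "hd (p @ q) = r" "last (p @ q) = a"
    using p(2) q(3) \<open>p \<noteq> []\<close> \<open>q \<noteq> []\<close> by simp_all
  ultimately have "p @ q = q" using rooted_at_walk_unique[OF \<open>a \<noteq> r\<close> _ _ _ q] by blast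
  then show False using \<open>p \<noteq> []\<close> by simp
qed

lemma rooted_at_walk_to_edge:
  assumes "(u, v) \<in> E"
  obtains p where "is_walk E (p @ [v])" "hd (p @ [v]) = r" "last p = u" "p \<noteq> []"
proof -
  obtain p where p: "is_walk E p" "hd p = r" "last p = u" using rooted_at_walk by blast
  then have "p \<noteq> []" by (auto simp: is_walk_def)
  moreover have "is_walk E (p @ [v])" using is_walk_append[OF p(1) is_walk_singleton] p(3) assms by simp
  ultimately show ?thesis using that p by simp
qed

lemma rooted_at_parent_unique:
  assumes "(u, v) \<in> E" "(u', v) \<in> E"
  shows "u = u'"
proof -
  have "v \<noteq> r" using assms(1) rooted_at_no_edge_to_root by blast
  obtain p where p: "is_walk E (p @ [v])" "hd (p @ [v]) = r" "last p = u"
    using rooted_at_walk_to_edge[OF assms(1)] by blast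
  obtain p' where p': "is_walk E (p' @ [v])" "hd (p' @ [v]) = r" "last p' = u'"
    using rooted_at_walk_to_edge[OF assms(2)] by blast
  have "p @ [v] = p' @ [v]" using rooted_at_walk_unique[OF \<open>v \<noteq> r\<close> p(1,2) _ p'(1,2)] by simp
  then show ?thesis using p(3) p'(3) by simp
qed

lemma rooted_at_irrefl: "(v, v) \<notin> E"
proof
  assume vv: "(v, v) \<in> E"
  have "v \<noteq> r" using vv rooted_at_no_edge_to_root by blast
  obtain p where p: "is_walk E (p @ [v])" "hd (p @ [v]) = r" "last p = v" "p \<noteq> []"
    using rooted_at_walk_to_edge[OF vv] by blast
  have "is_walk E p" "hd p = r" using p is_walk_append_left by auto
  then have "p @ [v] = p" using rooted_at_walk_unique[OF \<open>v \<noteq> r\<close> p(1,2)] p(3) by simp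
  then show False by simp
qed

lemma rooted_at_parent_exists:
  assumes "v \<noteq> r"
  shows "\<exists>u. (u, v) \<in> E"
proof -
  obtain p where p: "is_walk E p" "hd p = r" "last p = v" using rooted_at_walk by blast
  then show ?thesis using is_walk_last_edge[OF p(1)] assms by auto
qed

lemma rooted_at_child_exists: "\<exists>v. (r, v) \<in> E"
proof -
  obtain a c where "distinct [r, a, c]" using ex_distinct_3 by blast
  moreover obtain p where p: "is_walk E p" "hd p = r" "last p = a" using rooted_at_walk by blast
  ultimately show ?thesis using is_walk_first_edge[OF p(1)] by auto
qed

lemma rooted_at_centred_tree: "\<exists>a b c. centred_tree a b c E"
proof -
  obtain a c where rac: "distinct [r, a, c]" using ex_distinct_3 by blast
  have "a \<noteq> r" "c \<noteq> r" using rac by auto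
  then obtain pa pc where pa: "(pa, a) \<in> E" and pc: "(pc, c) \<in> E"
    using rooted_at_parent_exists by blast
  have "pa \<noteq> a" "pc \<noteq> c" using pa pc rooted_at_irrefl by blast+
  then have pa': "pa = r \<or> pa = c" and pc': "pc = r \<or> pc = a"
    using UNIV_3_distinct[OF rac] by blast+
  have E: "E = {(pa, a), (pc, c)}"
  proof (intro equalityI subsetI)
    fix e assume "e \<in> E"
    moreover obtain u v where uv: "e = (u, v)" by force
    ultimately have "v \<noteq> r" using rooted_at_no_edge_to_root by blast
    then have "v = a \<or> v = c" using UNIV_3_distinct[OF rac] by blast
    then show "e \<in> {(pa, a), (pc, c)}"
      using rooted_at_parent_unique \<open>e \<in> E\<close> uv pa pc by blast
  qed (use pa pc in auto)
  have "\<not> (pa = c \<and> pc = a)" using rooted_at_child_exists E rac by auto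
  then consider "pa = r" "pc = r" | "pa = r" "pc = a" | "pa = c" "pc = r" using pa' pc' by blast
  then show ?thesis
  proof cases
    case 1
    then have "centred_tree a r c E" using E rac by (auto simp: centred_tree_def)
    then show ?thesis by blast
  next
    case 2
    then have "centred_tree r a c E" using E rac by (auto simp: centred_tree_def)
    then show ?thesis by blast
  next
    case 3
    then have "centred_tree r c a E" using E rac by (auto simp: centred_tree_def insert_commute)
    then show ?thesis by blast
  qed
qed

end

lemma dtree_centred_tree: "dtree T \<Longrightarrow> \<exists>a b c. centred_tree a b c T"
  using rooted_at_centred_tree dtree_iff_rooted_at by blast

lemma dtree_star:
  assumes d: "distinct [a, b, c]"
  shows "dtree {(b, a), (b, c)}"
  unfolding dtree_iff_rooted_at rooted_at_def
proof (intro exI[of _ b] allI impI)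
  fix v assume vb: "v \<noteq> b"
  let ?T = "{(b, a), (b, c)}"
  have vac: "v = a \<or> v = c" using vb UNIV_3_distinct[OF d] by auto
  show "\<exists>!p. is_walk ?T p \<and> hd p = b \<and> last p = v"
  proof
    show "is_walk ?T [b, v] \<and> hd [b, v] = b \<and> last [b, v] = v"
      using vac by (auto simp: is_walk_def less_Suc_eq)
  next
    fix p assume p: "is_walk ?T p \<and> hd p = b \<and> last p = v"
    have "length p \<ge> 2" using is_walk_length_ge_2 p vb by metis
    moreover have "\<not> length p > 2"
    proof
      assume "length p > 2"
      then have "(p ! 0, p ! 1) \<in> ?T" "(p ! 1, p ! 2) \<in> ?T"
        using p unfolding is_walk_def by (metis One_nat_def Suc_1 Suc_lessD)+
      then show False using d by auto
    qed
    ultimately have "length p = 2" by simp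
    then obtain x y where "p = [x, y]"
      by (metis (no_types, lifting) One_nat_def Suc_1 length_0_conv length_Suc_conv)
    then show "p = [b, v]" using p by simp
  qed
qed

section \<open>Gaussians factorizing along a tree\<close>

text \<open>For positive f: log f has vanishing mixed difference in the coordinates a and c.\<close>
definition no_interaction :: "(real^'n \<Rightarrow> 'a::comm_monoid_mult) \<Rightarrow> 'n \<Rightarrow> 'n \<Rightarrow> bool" where
  "no_interaction f a c \<longleftrightarrow>
     (\<forall>x. f (x + axis a 1 + axis c 1) * f x = f (x + axis a 1) * f (x + axis c 1))"

lemma no_interaction_if_invariant:
  assumes "(\<forall>x. f (x + axis a 1) = f x) \<or> (\<forall>x. f (x + axis c 1) = f x)"
  shows "no_interaction f a c"
  unfolding no_interaction_def
proof
  fix x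
  have swap: "x + axis a (1::real) + axis c 1 = x + axis c 1 + axis a 1" by (simp add: ac_simps)
  from assms show "f (x + axis a 1 + axis c 1) * f x = f (x + axis a 1) * f (x + axis c 1)"
    by (elim disjE) (simp add: swap mult.commute, simp)
qed

lemma no_interaction_mult:
  assumes "no_interaction f a c" "no_interaction g a c"
  shows "no_interaction (\<lambda>x. f x * g x) a c"
  unfolding no_interaction_def
proof
  fix x
  let ?ac = "x + axis a (1::real) + axis c 1" and ?a = "x + axis a 1" and ?c = "x + axis c 1"
  have "(f ?ac * g ?ac) * (f x * g x) = (f ?ac * f x) * (g ?ac * g x)" by (simp add: ac_simps)
  also have "\<dots> = (f ?a * f ?c) * (g ?a * g ?c)" using assms unfolding no_interaction_def by simp
  finally show "(f ?ac * g ?ac) * (f x * g x) = (f ?a * g ?a) * (f ?c * g ?c)" by (simp add: ac_simps)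
qed

lemma no_interaction_prod:
  assumes "\<And>v. v \<in> A \<Longrightarrow> no_interaction (f v) a c"
  shows "no_interaction (\<lambda>x. \<Prod>v\<in>A. f v x) a c"
  using assms
proof (induction A rule: infinite_finite_induct)
  case (insert v A)
  then show ?case using no_interaction_mult[of "f v" a c] by simp
qed (simp_all add: no_interaction_def)

lemma factor_star:
  assumes "distinct [a, b, c]"
  shows "factor {(b, a), (b, c)} Q a = cond1 Q a b"
        "factor {(b, a), (b, c)} Q b = marg1 Q b"
        "factor {(b, a), (b, c)} Q c = cond1 Q c b"
  using assms by (auto simp: factor_def fun_eq_iff)

lemma factor_path:
  assumes "distinct [a, b, c]"
  shows "factor {(a, b), (b, c)} Q a = marg1 Q a"
        "factor {(a, b), (b, c)} Q b = cond1 Q b a"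
        "factor {(a, b), (b, c)} Q c = cond1 Q c b"
  using assms by (auto simp: factor_def fun_eq_iff)

lemma centred_tree_factor_invariant:
  assumes "centred_tree a b c T"
  shows "factor T Q v (x + axis (if v = c then a else c) s) = factor T Q v x"
proof -
  have d: "distinct [a, b, c]" and T: "T = {(b, a), (b, c)} \<or> T = {(a, b), (b, c)}"
    using assms by (auto simp: centred_tree_def)
  have "v = a \<or> v = b \<or> v = c" using UNIV_3_distinct[OF d] by blast
  then show ?thesis
    using T d by (elim disjE) (auto simp: factor_star factor_path cond1_def marg1_def axis_def)
qed

lemma factorizes_no_interaction:
  assumes "centred_tree a b c T" "factorizes T Q"
  shows "no_interaction (gdens3 Q) a c"
proof -
  have "no_interaction (factor T Q v) a c" for v
  proof (intro no_interaction_if_invariant)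
    show "(\<forall>x. factor T Q v (x + axis a 1) = factor T Q v x) \<or> (\<forall>x. factor T Q v (x + axis c 1) = factor T Q v x)"
      using centred_tree_factor_invariant[OF assms(1), of Q v] by (cases "v = c") auto
  qed
  then have "no_interaction (\<lambda>x. \<Prod>v\<in>UNIV. factor T Q v x) a c"
    by (rule no_interaction_prod)
  moreover have "gdens3 Q = (\<lambda>x. \<Prod>v\<in>UNIV. factor T Q v x)"
    using assms(2) by (auto simp: factorizes_def)
  ultimately show ?thesis by simp
qed

lemma gdens3_no_interaction_precision_zero:
  assumes "is_gauss3 Q" "no_interaction (gdens3 Q) a c"
  shows "matrix_inv (snd Q) $ a $ c = 0"
proof -
  define K where "K = matrix_inv (snd Q)"
  define q where "q x = (x - fst Q) \<bullet> (K *v (x - fst Q))" for x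
  have "pos_def3 K" using assms(1) pos_def3_matrix_inv by (simp add: is_gauss3_def K_def)
  then have Kt: "transpose K = K" by (simp add: pos_def3_def)
  define C where "C = sqrt ((2*pi)^3 * det (snd Q))"
  have G: "gdens3 Q x = exp (- q x / 2) / C" for x
    by (simp add: gdens3_def Let_def q_def K_def C_def)
  have "det (snd Q) \<noteq> 0"
    using pos_def3_det_matrix_inv[of "snd Q"] assms(1) unfolding is_gauss3_def by auto
  then have "C \<noteq> 0" by (simp add: C_def)
  have "gdens3 Q (0 + axis a 1 + axis c 1) * gdens3 Q 0 = gdens3 Q (0 + axis a 1) * gdens3 Q (0 + axis c 1)"
    using assms(2) unfolding no_interaction_def by blast
  then have "exp (- q (axis a 1 + axis c 1) / 2) * exp (- q 0 / 2)
      = exp (- q (axis a 1) / 2) * exp (- q (axis c 1) / 2)"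
    using \<open>C \<noteq> 0\<close> by (simp add: G field_simps)
  then have "exp (- q (axis a 1 + axis c 1) / 2 + - q 0 / 2) = exp (- q (axis a 1) / 2 + - q (axis c 1) / 2)"
    by (simp only: exp_add)
  then have "q (axis a 1 + axis c 1) + q 0 - q (axis a 1) - q (axis c 1) = 0"
    by simp
  then have "K$a$c + K$c$a = 0"
    unfolding q_def quadratic_form_mixed_difference inner_axis_matrix_vector_axis .
  then show ?thesis using transpose_sym_nth[OF Kt, of a c] by (simp add: K_def)
qed

text \<open>The conditional mutual information I(X_a; X_c | X_b) of a Gaussian with covariance S.\<close>
definition gauss_cmi :: "real^3^3 \<Rightarrow> 3 \<Rightarrow> 3 \<Rightarrow> 3 \<Rightarrow> real" where
  "gauss_cmi S a b c = (ln (S$a$a * S$b$b - (S$a$b)^2) + ln (S$c$c * S$b$b - (S$c$b)^2)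
     - ln (S$b$b) - ln (det S)) / 2"

lemma KL3_centred_tree_lower_bound:
  fixes S :: "real^3^3"
  assumes T: "centred_tree a b c T" and g: "is_gauss3 Q" and f: "factorizes T Q"
    and S: "transpose S = S" "S$b$b > 0" "S$a$a * S$b$b - (S$a$b)^2 > 0"
      "S$c$c * S$b$b - (S$c$b)^2 > 0" "det S > 0"
  shows "gauss_cmi S a b c \<le> KL3 (m, S) Q"
proof -
  define K where "K = matrix_inv (snd Q)"
  have d: "distinct [a, b, c]" using T by (simp add: centred_tree_def)
  have pd: "pos_def3 (snd Q)" using g by (simp add: is_gauss3_def)
  then have K: "pos_def3 K" by (simp add: K_def pos_def3_matrix_inv)
  have z: "K$a$c = 0"
    using gdens3_no_interaction_precision_zero[OF g factorizes_no_interaction[OF T f]] by (simp add: K_def)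
  have Kt: "transpose K = K" using K by (simp add: pos_def3_def)
  have ks: "K$c$a = 0" "K$b$a = K$a$b" "K$b$c = K$c$b"
    using z transpose_sym_nth[OF Kt] by metis+
  have ss: "S$b$a = S$a$b" "S$b$c = S$c$b" using transpose_sym_nth[OF S(1)] by blast+
  have "K$a$a > 0" "K$c$c > 0" using pos_def3_diag_pos[OF K] by blast+
  have detK: "det K = K$a$a * K$b$b * K$c$c - (K$a$b)^2 * K$c$c - (K$c$b)^2 * K$a$a"
    using det_3_zero_corner[OF d z ks] .
  have "det K > 0" using pos_def3_det_pos_zero_corner[OF K d z] .
  have "det (snd Q) / det S = inverse (det K * det S)"
    using pos_def3_det_matrix_inv[OF pd] \<open>det K > 0\<close> S(5) by (simp add: K_def field_simps)
  then have "2 * KL3 (m, S) Q = trace (K ** S) + (fst Q - m) \<bullet> (K *v (fst Q - m)) - 3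
      - ln (det K) - ln (det S)"
    using \<open>det K > 0\<close> S(5) by (simp add: KL3_def K_def ln_inverse ln_mult)
  moreover have "trace (K ** S) = K$a$a * S$a$a + K$b$b * S$b$b + K$c$c * S$c$c
      + 2 * K$a$b * S$a$b + 2 * K$c$b * S$c$b"
    unfolding trace_matrix_mult_sum sum_UNIV_3_distinct[OF d] using z ks ss by simp
  moreover have "(fst Q - m) \<bullet> (K *v (fst Q - m)) \<ge> 0" using pos_def3_nonneg[OF K] .
  moreover note trace_logdet_lower_bound[OF \<open>K$a$a > 0\<close> \<open>K$c$c > 0\<close>
      \<open>det K > 0\<close>[unfolded detK] S(2-4), folded detK]
  moreover have "2 * gauss_cmi S a b c = ln (S$a$a * S$b$b - (S$a$b)^2)
      + ln (S$c$c * S$b$b - (S$c$b)^2) - ln (S$b$b) - ln (det S)"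
    by (simp add: gauss_cmi_def)
  ultimately show ?thesis by linarith
qed

text \<open>The covariance of X_b ~ N(0, s), X_a = ba X_b + N(0, va), X_c = bc X_b + N(0, vc) with
independent noises; chain_prec is its inverse.\<close>
definition chain_cov :: "3 \<Rightarrow> 3 \<Rightarrow> 3 \<Rightarrow> real \<Rightarrow> real \<Rightarrow> real \<Rightarrow> real \<Rightarrow> real \<Rightarrow> real^3^3" where
  "chain_cov a b c s ba bc va vc = (\<chi> i j.
     if i = b \<and> j = b then s
     else if (i = a \<and> j = b) \<or> (i = b \<and> j = a) then ba * s
     else if (i = c \<and> j = b) \<or> (i = b \<and> j = c) then bc * s
     else if i = a \<and> j = a then ba^2 * s + va
     else if i = c \<and> j = c then bc^2 * s + vc
     else ba * bc * s)"

definition chain_prec :: "3 \<Rightarrow> 3 \<Rightarrow> 3 \<Rightarrow> real \<Rightarrow> real \<Rightarrow> real \<Rightarrow> real \<Rightarrow> real \<Rightarrow> real^3^3" where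
  "chain_prec a b c s ba bc va vc = (\<chi> i j.
     if i = b \<and> j = b then 1/s + ba^2/va + bc^2/vc
     else if (i = a \<and> j = b) \<or> (i = b \<and> j = a) then -ba/va
     else if (i = c \<and> j = b) \<or> (i = b \<and> j = c) then -bc/vc
     else if i = a \<and> j = a then 1/va
     else if i = c \<and> j = c then 1/vc
     else 0)"

context
  fixes a b c :: 3 and s ba bc va vc :: real
  assumes d: "distinct [a, b, c]"
begin

lemma chain_cov_nth:
  "chain_cov a b c s ba bc va vc $ b $ b = s"
  "chain_cov a b c s ba bc va vc $ a $ b = ba * s" "chain_cov a b c s ba bc va vc $ b $ a = ba * s"
  "chain_cov a b c s ba bc va vc $ c $ b = bc * s" "chain_cov a b c s ba bc va vc $ b $ c = bc * s"
  "chain_cov a b c s ba bc va vc $ a $ a = ba^2 * s + va"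
  "chain_cov a b c s ba bc va vc $ c $ c = bc^2 * s + vc"
  "chain_cov a b c s ba bc va vc $ a $ c = ba * bc * s" "chain_cov a b c s ba bc va vc $ c $ a = ba * bc * s"
  using d by (auto simp: chain_cov_def)

lemma chain_prec_nth:
  "chain_prec a b c s ba bc va vc $ b $ b = 1/s + ba^2/va + bc^2/vc"
  "chain_prec a b c s ba bc va vc $ a $ b = -ba/va" "chain_prec a b c s ba bc va vc $ b $ a = -ba/va"
  "chain_prec a b c s ba bc va vc $ c $ b = -bc/vc" "chain_prec a b c s ba bc va vc $ b $ c = -bc/vc"
  "chain_prec a b c s ba bc va vc $ a $ a = 1/va"
  "chain_prec a b c s ba bc va vc $ c $ c = 1/vc"
  "chain_prec a b c s ba bc va vc $ a $ c = 0" "chain_prec a b c s ba bc va vc $ c $ a = 0"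
  using d by (auto simp: chain_prec_def)

context
  assumes s: "s > 0" and va: "va > 0" and vc: "vc > 0"
begin

lemma chain_cov_mult_chain_prec: "chain_cov a b c s ba bc va vc ** chain_prec a b c s ba bc va vc = mat 1"
proof -
  have "a \<noteq> b" "b \<noteq> a" "a \<noteq> c" "c \<noteq> a" "b \<noteq> c" "c \<noteq> b" using d by auto
  then show ?thesis
    unfolding vec_eq_iff all_3_distinct[OF d] matrix_matrix_mult_def sum_UNIV_3_distinct[OF d]
    using s va vc by (simp add: chain_cov_nth chain_prec_nth mat_def field_simps power2_eq_square)
qed

lemma matrix_inv_chain_cov: "matrix_inv (chain_cov a b c s ba bc va vc) = chain_prec a b c s ba bc va vc"
  using chain_cov_mult_chain_prec by (rule matrix_inv_eqI)

lemma det_chain_cov: "det (chain_cov a b c s ba bc va vc) = s * va * vc"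
proof -
  have P: "det (chain_prec a b c s ba bc va vc) = 1 / (s * va * vc)"
    using s va vc det_3_zero_corner[OF d, of "chain_prec a b c s ba bc va vc"]
    by (simp add: chain_prec_nth field_simps power2_eq_square)
  have "det (chain_cov a b c s ba bc va vc) * det (chain_prec a b c s ba bc va vc) = 1"
    using arg_cong[OF chain_cov_mult_chain_prec, of det] by (simp add: det_mul)
  then have "det (chain_cov a b c s ba bc va vc) * (1 / (s * va * vc)) = 1" unfolding P .
  then show ?thesis using s va vc by (simp add: field_simps)
qed

lemma chain_prec_quadratic_form:
  "y \<bullet> (chain_prec a b c s ba bc va vc *v y) = (y$b)^2/s + (y$a - ba * y$b)^2/va + (y$c - bc * y$b)^2/vc"
  unfolding quadratic_form_sum sum_UNIV_3_distinct[OF d] using s va vc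
  by (simp add: chain_prec_nth power2_eq_square field_simps)

lemma pos_def3_chain_cov: "pos_def3 (chain_cov a b c s ba bc va vc)"
  unfolding pos_def3_def
proof (intro conjI allI impI)
  show "transpose (chain_cov a b c s ba bc va vc) = chain_cov a b c s ba bc va vc"
    unfolding vec_eq_iff all_3_distinct[OF d] transpose_def by (simp add: chain_cov_nth)
next
  fix x :: "real^3" assume "x \<noteq> 0"
  define q where "q = s * (x$b + ba * x$a + bc * x$c)^2 + va * (x$a)^2 + vc * (x$c)^2"
  have "x \<bullet> (chain_cov a b c s ba bc va vc *v x) = q"
    unfolding q_def quadratic_form_sum sum_UNIV_3_distinct[OF d]
    by (simp add: chain_cov_nth power2_eq_square algebra_simps)
  moreover have "q > 0"
  proof (rule ccontr)
    assume "\<not> q > 0"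
    moreover have "s * (x$b + ba * x$a + bc * x$c)^2 \<ge> 0" "va * (x$a)^2 \<ge> 0" "vc * (x$c)^2 \<ge> 0"
      using s va vc by simp_all
    ultimately have "s * (x$b + ba * x$a + bc * x$c)^2 = 0" "va * (x$a)^2 = 0" "vc * (x$c)^2 = 0"
      unfolding q_def by linarith+
    then have "x$a = 0" "x$c = 0" "x$b = 0" using s va vc by simp_all
    then show False using \<open>x \<noteq> 0\<close> unfolding vec_eq_iff all_3_distinct[OF d] by simp
  qed
  ultimately show "x \<bullet> (chain_cov a b c s ba bc va vc *v x) > 0" by simp
qed

end

end

lemma gdens1_pos: "s > 0 \<Longrightarrow> gdens1 m s t > 0"
  by (simp add: gdens1_def)

lemma gdens2_swap: "gdens2 mu mv suu suv svv tu tv = gdens2 mv mu svv suv suu tv tu"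
  by (simp add: gdens2_def Let_def algebra_simps)

lemma gdens2_regression:
  assumes s: "s > 0" and v: "v > 0"
  shows "gdens2 mu mw s (\<beta> * s) (\<beta>\<^sup>2 * s + v) u w = gdens1 mu s u * gdens1 mw v (w - \<beta> * (u - mu))"
proof -
  define r where "r = w - \<beta> * (u - mu) - mw"
  have det: "s * (\<beta>\<^sup>2 * s + v) - (\<beta> * s)\<^sup>2 = s * v" by (simp add: algebra_simps power2_eq_square)
  have q: "((\<beta>\<^sup>2 * s + v) * (u - mu)\<^sup>2 - 2 * (\<beta> * s) * (u - mu) * (w - mw) + s * (w - mw)\<^sup>2) / (s * v)
       = (u - mu)\<^sup>2 / s + r\<^sup>2 / v"
    using s v by (simp add: r_def field_simps power2_eq_square)
  have e: "exp (- ((u - mu)\<^sup>2 / s + r\<^sup>2 / v) / 2) = exp (- (u - mu)\<^sup>2 / (2 * s)) * exp (- r\<^sup>2 / (2 * v))"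
    by (simp add: exp_add[symmetric] field_simps)
  have "sqrt (2 * pi * s) * sqrt (2 * pi * v) = sqrt ((2 * pi)\<^sup>2 * (s * v))"
    by (simp add: real_sqrt_mult[symmetric] power2_eq_square algebra_simps)
  also have "\<dots> = 2 * pi * sqrt (s * v)" by (simp add: real_sqrt_mult)
  finally have "2 * pi * sqrt (s * v) = sqrt (2 * pi * s) * sqrt (2 * pi * v)" ..
  then show ?thesis
    unfolding gdens2_def gdens1_def Let_def det q e r_def[symmetric] by simp
qed

lemma gdens3_chain_cov:
  assumes d: "distinct [a, b, c]" and s: "s > 0" and va: "va > 0" and vc: "vc > 0"
  shows "gdens3 (m, chain_cov a b c s ba bc va vc) x
    = gdens1 (m$b) s (x$b) * gdens1 (m$a) va (x$a - ba * (x$b - m$b)) * gdens1 (m$c) vc (x$c - bc * (x$b - m$b))"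
proof -
  define y where "y = x - m"
  define ra where "ra = x$a - ba * (x$b - m$b) - m$a"
  define rc where "rc = x$c - bc * (x$b - m$b) - m$c"
  have r: "y$a - ba * y$b = ra" "y$c - bc * y$b = rc" by (simp_all add: y_def ra_def rc_def)
  have e: "exp (- (1/2) * ((y$b)\<^sup>2/s + ra\<^sup>2/va + rc\<^sup>2/vc))
      = exp (- (y$b)\<^sup>2 / (2 * s)) * exp (- ra\<^sup>2 / (2 * va)) * exp (- rc\<^sup>2 / (2 * vc))"
    by (simp add: exp_add[symmetric] field_simps)
  have "sqrt (2 * pi * s) * sqrt (2 * pi * va) * sqrt (2 * pi * vc) = sqrt ((2 * pi)^3 * (s * va * vc))"
    by (simp add: real_sqrt_mult[symmetric] power3_eq_cube algebra_simps)
  then show ?thesis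
    unfolding gdens3_def gdens1_def Let_def fst_conv snd_conv y_def[symmetric]
      matrix_inv_chain_cov[OF d s va vc] chain_prec_quadratic_form[OF d s va vc] det_chain_cov[OF d s va vc] r e
    by (simp add: y_def ra_def rc_def)
qed

lemma factorizes_chain_cov:
  assumes T: "centred_tree a b c T" and s: "s > 0" and va: "va > 0" and vc: "vc > 0"
  shows "factorizes T (m, chain_cov a b c s ba bc va vc)"
  unfolding factorizes_def
proof
  fix x :: "real^3"
  let ?Q = "(m, chain_cov a b c s ba bc va vc)"
  have d: "distinct [a, b, c]" using T by (simp add: centred_tree_def)
  let ?fa = "gdens1 (m$a) va (x$a - ba * (x$b - m$b))"
  let ?fc = "gdens1 (m$c) vc (x$c - bc * (x$b - m$b))"
  have mb: "marg1 ?Q b x = gdens1 (m$b) s (x$b)"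
    by (simp add: marg1_def chain_cov_nth[OF d])
  have "marg1 ?Q a x > 0"
    using s va by (simp add: marg1_def chain_cov_nth[OF d] gdens1_pos add_nonneg_pos)
  have "gdens1 (m$b) s (x$b) > 0" using s by (rule gdens1_pos)
  then have ab: "cond1 ?Q a b x = ?fa" and cb: "cond1 ?Q c b x = ?fc"
    using s va vc by (simp_all add: cond1_def mb chain_cov_nth[OF d] gdens2_regression)
  have ba: "cond1 ?Q b a x = marg1 ?Q b x * ?fa / marg1 ?Q a x"
    using s va by (simp add: cond1_def mb chain_cov_nth[OF d] gdens2_regression gdens2_swap[of "m$a"])
  have joint: "gdens3 ?Q x = marg1 ?Q b x * ?fa * ?fc"
    unfolding gdens3_chain_cov[OF d s va vc] mb ..
  from T consider "T = {(b, a), (b, c)}" | "T = {(a, b), (b, c)}" unfolding centred_tree_def by blast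
  then show "gdens3 ?Q x = (\<Prod>v\<in>UNIV. factor T ?Q v x)"
  proof cases
    case 1
    show ?thesis unfolding 1 prod_UNIV_3_distinct[OF d] factor_star[OF d] joint ab cb
      by (simp add: ac_simps)
  next
    case 2
    show ?thesis unfolding 2 prod_UNIV_3_distinct[OF d] factor_path[OF d] joint ba cb
      using \<open>marg1 ?Q a x > 0\<close> by simp
  qed
qed

lemma KL_tree_centred_tree:
  fixes S :: "real^3^3"
  assumes T: "centred_tree a b c T"
    and S: "transpose S = S" "S$b$b > 0" "S$a$a * S$b$b - (S$a$b)\<^sup>2 > 0"
      "S$c$c * S$b$b - (S$c$b)\<^sup>2 > 0" "det S > 0"
  shows "KL_tree (m, S) T = gauss_cmi S a b c"
proof -
  have d: "distinct [a, b, c]" using T by (simp add: centred_tree_def)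
  define s where "s = S$b$b"
  define ba where "ba = S$a$b / s"
  define bc where "bc = S$c$b / s"
  define va where "va = S$a$a - (S$a$b)\<^sup>2 / s"
  define vc where "vc = S$c$c - (S$c$b)\<^sup>2 / s"
  have s: "s > 0" using S(2) by (simp add: s_def)
  have va: "va > 0" and vc: "vc > 0" using S(3,4) s by (simp_all add: va_def vc_def s_def field_simps)
  \<comment> \<open>the minimiser keeps the mean and the (a,b)- and (c,b)-marginals of (m, S)\<close>
  define Q where "Q = (m, chain_cov a b c s ba bc va vc)"
  have ss: "S$b$a = S$a$b" "S$b$c = S$c$b" using transpose_sym_nth[OF S(1)] by blast+
  have e: "S$b$b = s" "S$a$b = ba * s" "S$c$b = bc * s" "S$a$a = ba\<^sup>2 * s + va" "S$c$c = bc\<^sup>2 * s + vc"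
    using s by (simp_all add: s_def ba_def bc_def va_def vc_def field_simps power2_eq_square)
  have "trace (chain_prec a b c s ba bc va vc ** S) = 3"
    unfolding trace_matrix_mult_sum sum_UNIV_3_distinct[OF d] using s va vc
    by (simp add: chain_prec_nth[OF d] ss e field_simps power2_eq_square)
  then have "KL3 (m, S) Q = ln (s * va * vc / det S) / 2"
    by (simp add: KL3_def Q_def matrix_inv_chain_cov[OF d s va vc] det_chain_cov[OF d s va vc])
  also have "\<dots> = gauss_cmi S a b c"
    using s va vc S(5) by (simp add: gauss_cmi_def e field_simps power2_eq_square ln_mult ln_div)
  finally have KLQ: "KL3 (m, S) Q = gauss_cmi S a b c" .
  define A where "A = {Q. is_gauss3 Q \<and> factorizes T Q}"
  have Q: "Q \<in> A"
    using pos_def3_chain_cov[OF d s va vc] factorizes_chain_cov[OF T s va vc]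
    by (simp add: A_def Q_def is_gauss3_def)
  have lb: "gauss_cmi S a b c \<le> KL3 (m, S) Q'" if "Q' \<in> A" for Q'
    using KL3_centred_tree_lower_bound[OF T _ _ S] that by (simp add: A_def)
  have "bdd_below ((\<lambda>Q. KL3 (m, S) Q) ` A)" using lb by (rule bdd_belowI2)
  then have "(INF Q\<in>A. KL3 (m, S) Q) \<le> gauss_cmi S a b c"
    using cINF_lower[OF _ Q] KLQ by metis
  moreover have "gauss_cmi S a b c \<le> (INF Q\<in>A. KL3 (m, S) Q)"
    using Q lb by (intro cINF_greatest) auto
  ultimately show ?thesis unfolding KL_tree_def A_def[symmetric] by (rule antisym)
qed

section \<open>The latent-variable models\<close>

definition latent_cmi :: "real^3 \<Rightarrow> 3 \<Rightarrow> 3 \<Rightarrow> 3 \<Rightarrow> real" where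
  "latent_cmi v a b c = (ln (1 + (v$a)\<^sup>2 + (v$b)\<^sup>2) + ln (1 + (v$c)\<^sup>2 + (v$b)\<^sup>2)
     - ln (1 + (v$b)\<^sup>2) - ln (1 + (\<Sum>i\<in>UNIV. (v$i)\<^sup>2))) / 2"

lemma latent_model_nth: "snd (latent_model v) $ i $ j = v$i * v$j + (if i = j then 1 else 0)"
  by (simp add: latent_model_def)

lemma det_latent_model: "det (snd (latent_model v)) = 1 + (\<Sum>i\<in>UNIV. (v$i)\<^sup>2)"
  unfolding det_3 latent_model_nth sum_3 by (simp add: power2_eq_square algebra_simps)

lemma KL_tree_latent_model:
  assumes T: "centred_tree a b c T"
  shows "KL_tree (latent_model v) T = latent_cmi v a b c"
proof -
  define S where "S = snd (latent_model v)"
  have d: "distinct [a, b, c]" using T by (simp add: centred_tree_def)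
  have "a \<noteq> b" "c \<noteq> b" using d by auto
  then have minors: "S$a$a * S$b$b - (S$a$b)\<^sup>2 = 1 + (v$a)\<^sup>2 + (v$b)\<^sup>2"
      "S$c$c * S$b$b - (S$c$b)\<^sup>2 = 1 + (v$c)\<^sup>2 + (v$b)\<^sup>2"
    by (simp_all add: S_def latent_model_nth power2_eq_square algebra_simps)
  have "transpose S = S" by (simp add: S_def vec_eq_iff transpose_def latent_model_nth mult.commute)
  moreover have "S$b$b > 0" by (simp add: S_def latent_model_nth add_nonneg_pos)
  moreover have "S$a$a * S$b$b - (S$a$b)\<^sup>2 > 0" "S$c$c * S$b$b - (S$c$b)\<^sup>2 > 0"
    unfolding minors by (simp_all add: add_pos_nonneg)
  moreover have "det S > 0" unfolding S_def det_latent_model by (simp add: add_pos_nonneg sum_nonneg)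
  ultimately have "KL_tree (0, S) T = gauss_cmi S a b c" by (rule KL_tree_centred_tree[OF T])
  moreover have "latent_model v = (0, S)" by (simp add: S_def latent_model_def)
  moreover have "gauss_cmi S a b c = latent_cmi v a b c"
  proof -
    have "S$b$b = 1 + (v$b)\<^sup>2" by (simp add: S_def latent_model_nth power2_eq_square)
    moreover have "det S = 1 + (\<Sum>i\<in>UNIV. (v$i)\<^sup>2)" by (simp add: S_def det_latent_model)
    ultimately show ?thesis unfolding gauss_cmi_def latent_cmi_def minors by simp
  qed
  ultimately show ?thesis by simp
qed

text \<open>The value of latent_cmi for loadings (t,1,1) up to permutation, when the centre carries the
loading t, resp. a loading 1.\<close>
definition cmi_heavy_centre :: "real \<Rightarrow> real" where
  "cmi_heavy_centre t = (2 * ln (t\<^sup>2 + 2) - ln (t\<^sup>2 + 1) - ln (t\<^sup>2 + 3)) / 2"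

definition cmi_light_centre :: "real \<Rightarrow> real" where
  "cmi_light_centre t = (ln (t\<^sup>2 + 2) + ln 3 - ln 2 - ln (t\<^sup>2 + 3)) / 2"

lemma latent_cmi_one_heavy:
  assumes d: "distinct [a, b, c]" and v: "\<And>i. v$i = (if i = h then t else 1)"
  shows "latent_cmi v a b c = (if b = h then cmi_heavy_centre t else cmi_light_centre t)"
proof -
  have "h = a \<or> h = b \<or> h = c" using UNIV_3_distinct[OF d] by blast
  then show ?thesis
    using d unfolding latent_cmi_def cmi_heavy_centre_def cmi_light_centre_def sum_UNIV_3_distinct[OF d] v
    by (elim disjE) (auto simp: field_simps)
qed

lemma KL_tree_R1:
  assumes "centred_tree a b c T"
  shows "KL_tree (R1 e) T = (if b = 1 then cmi_heavy_centre (1 + e) else cmi_light_centre (1 + e))"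
proof -
  have "vector [1 + e, 1, 1] $ i = (if i = 1 then 1 + e else (1::real))" for i :: 3
    using exhaust_3[of i] by auto
  then show ?thesis using assms unfolding R1_def KL_tree_latent_model[OF assms]
    by (intro latent_cmi_one_heavy) (auto simp: centred_tree_def)
qed

lemma KL_tree_R2:
  assumes "centred_tree a b c T"
  shows "KL_tree (R2 e) T = (if b = 2 then cmi_heavy_centre (1 + e) else cmi_light_centre (1 + e))"
proof -
  have "vector [1, 1 + e, 1] $ i = (if i = 2 then 1 + e else (1::real))" for i :: 3
    using exhaust_3[of i] by auto
  then show ?thesis using assms unfolding R2_def KL_tree_latent_model[OF assms]
    by (intro latent_cmi_one_heavy) (auto simp: centred_tree_def)
qed

lemma cmi_centre_gap:
  fixes e :: real
  assumes e: "0 < e" "e < 1"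
  shows "cmi_heavy_centre (1 + e) + e / 100 < cmi_light_centre (1 + e)"
proof -
  define t where "t = 1 + e"
  define x where "x = (t\<^sup>2 - 1) / (2 * (t\<^sup>2 + 2))"
  have sq: "t\<^sup>2 = 1 + 2 * e + e * e" by (simp add: t_def power2_eq_square algebra_simps)
  have "e * e < 1 * e" using e by (intro mult_strict_right_mono) auto
  then have "2 * e \<le> t\<^sup>2 - 1" "t\<^sup>2 < 4" using sq e zero_le_square[of e] by linarith+
  then have "(2 * e) / 12 \<le> x" unfolding x_def using e by (intro frac_le) auto
  moreover have "x \<le> 1 / 2" using \<open>t\<^sup>2 < 4\<close> by (simp add: x_def field_simps add_pos_nonneg)
  ultimately have x: "e / 6 \<le> x" "x \<le> 1 / 2" by simp_all
  have pos: "t\<^sup>2 + 1 > 0" "t\<^sup>2 + 2 > 0" by (simp_all add: add_nonneg_pos)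
  then have q: "3 * (t\<^sup>2 + 1) / (2 * (t\<^sup>2 + 2)) = 1 + x" by (simp add: x_def field_simps)
  have "ln (1 + x) = ln (3 * (t\<^sup>2 + 1)) - ln (2 * (t\<^sup>2 + 2))"
    unfolding q[symmetric] using pos by (intro ln_divide_pos) auto
  also have "\<dots> = ln 3 + ln (t\<^sup>2 + 1) - ln 2 - ln (t\<^sup>2 + 2)"
    using pos ln_mult[of 3 "t\<^sup>2 + 1"] ln_mult[of 2 "t\<^sup>2 + 2"] by simp
  finally have "ln 3 + ln (t\<^sup>2 + 1) - ln 2 - ln (t\<^sup>2 + 2) = ln (1 + x)" ..
  moreover have "x - x\<^sup>2 \<le> ln (1 + x)" using x e by (intro ln_one_plus_pos_lower_bound) auto
  moreover have "x / 2 \<le> x - x\<^sup>2" using x e by (simp add: power2_eq_square mult_left_le)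
  moreover have "2 * (cmi_light_centre t - cmi_heavy_centre t) = ln 3 + ln (t\<^sup>2 + 1) - ln 2 - ln (t\<^sup>2 + 2)"
    by (simp add: cmi_light_centre_def cmi_heavy_centre_def field_simps)
  ultimately have "e / 12 \<le> 2 * (cmi_light_centre t - cmi_heavy_centre t)"
    using x by linarith
  then show ?thesis using e by (simp add: t_def)
qed

lemma INF_dtree_le:
  assumes "dtree T0"
  shows "(INF T\<in>{T. dtree T}. KL_tree R T) \<le> KL_tree R T0"
  using assms by (intro cINF_lower bdd_below_finite) auto

lemma near_optimal_tree_separates:
  fixes h h' :: 3 and A B \<delta> :: real
  assumes own: "\<And>a b c T. centred_tree a b c T \<Longrightarrow> KL_tree R T = (if b = h then A else B)"
    and other: "\<And>a b c T. centred_tree a b c T \<Longrightarrow> KL_tree R' T = (if b = h' then A else B)"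
    and "h \<noteq> h'" and gap: "A + \<delta> < B" and "dtree T'"
    and near: "KL_tree R T' \<le> (INF T\<in>{T. dtree T}. KL_tree R T) + \<delta>"
  shows "KL_tree R T' < KL_tree R' T'"
proof -
  obtain a c where "distinct [h, a, c]" using ex_distinct_3 by blast
  then have "centred_tree a h c {(h, a), (h, c)}" "dtree {(h, a), (h, c)}"
    using dtree_star[of a h c] by (auto simp: centred_tree_def)
  then have min_le: "(INF T\<in>{T. dtree T}. KL_tree R T) \<le> A"
    using INF_dtree_le own by fastforce
  moreover obtain a' b' c' where T': "centred_tree a' b' c' T'"
    using dtree_centred_tree \<open>dtree T'\<close> by blast
  ultimately have "b' = h" using near gap own[OF T'] by (cases "b' = h") auto
  then show ?thesis using near gap own[OF T'] other[OF T'] \<open>h \<noteq> h'\<close> min_le by auto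
qed

theorem lemma6:
  shows "\<exists>\<epsilon>0 > (0::real). \<forall>\<epsilon>. 0 < \<epsilon> \<and> \<epsilon> < \<epsilon>0 \<longrightarrow>
    (\<forall>Rs Ro That. {Rs, Ro} = {R1 \<epsilon>, R2 \<epsilon>} \<and> Rs \<noteq> Ro \<and> dtree That \<and>
        KL_tree Rs That \<le> (INF T \<in> {T. dtree T}. KL_tree Rs T) + \<epsilon> / 100
      \<longrightarrow> KL_tree Rs That < KL_tree Ro That)"
proof (intro exI[of _ 1] conjI allI impI)
  fix e :: real and Rs Ro That
  assume e: "0 < e \<and> e < 1"
  assume H: "{Rs, Ro} = {R1 e, R2 e} \<and> Rs \<noteq> Ro \<and> dtree That \<and>
    KL_tree Rs That \<le> (INF T \<in> {T. dtree T}. KL_tree Rs T) + e / 100"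
  have gap: "cmi_heavy_centre (1 + e) + e / 100 < cmi_light_centre (1 + e)"
    using cmi_centre_gap e by blast
  have "(Rs = R1 e \<and> Ro = R2 e) \<or> (Rs = R2 e \<and> Ro = R1 e)"
    using H by (metis doubleton_eq_iff)
  then show "KL_tree Rs That < KL_tree Ro That"
  proof (elim disjE conjE)
    assume "Rs = R1 e" "Ro = R2 e"
    then show ?thesis
      using near_optimal_tree_separates[OF KL_tree_R1 KL_tree_R2 _ gap] H by simp
  next
    assume "Rs = R2 e" "Ro = R1 e"
    then show ?thesis
      using near_optimal_tree_separates[OF KL_tree_R2 KL_tree_R1 _ gap] H by simp
  qed
qed simp

end
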